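(* Let $n\ge 3$ be odd. Then $K^*_n$ has a rotationally symmetric (r.s.) nomadic near-Hamiltonian decomposition: there is a partition of the arc set of $K^*_n$ (with vertex set $\mathbb{Z}_n$) into $n$ directed cycles $C_1,\dots,C_n$, each of length $n-1$, together with a choice of root vertex $v_i$ on each $C_i$, such that, writing $g_i(t)=v_i^{+t}$ for the position of the nomad on $C_i$ at time $t$, for every pair $i\neq j$ there is a constant $c_{ij}\not\equiv 0 \pmod n$ with $g_i(t)-g_j(t)\equiv c_{ij}\pmod n$ for all integers $t\ge 0$. In particular $v_i^{+t}\neq v_j^{+t}$ for all $i\ne j$ and all $t\ge 0$. *)

theory Defs
  imports "HOL-Number_Theory.Cong"
begin

text \<open>Vertices of K*_n are 0..n-1, representing Z_n. Arcs: all ordered pairs of distinct vertices.\<close>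
definition Kstar_arcs :: "nat \<Rightarrow> (nat \<times> nat) set" where
  "Kstar_arcs n = {(u, v). u < n \<and> v < n \<and> u \<noteq> v}"

text \<open>A directed cycle of length m in K*_n, given by its vertex sequence s 0, ..., s (m-1)
  starting at its root vertex s 0 (arcs s k -> s (k+1 mod m)).\<close>
definition is_dicycle :: "nat \<Rightarrow> nat \<Rightarrow> (nat \<Rightarrow> nat) \<Rightarrow> bool" where
  "is_dicycle n m s \<longleftrightarrow> m \<ge> 2 \<and> inj_on s {..<m} \<and> s ` {..<m} \<subseteq> {..<n}"

definition cycle_arcs :: "nat \<Rightarrow> (nat \<Rightarrow> nat) \<Rightarrow> (nat \<times> nat) set" where
  "cycle_arcs m s = {(s k, s ((k + 1) mod m)) | k. k < m}"

text \<open>Position v^{+t} of the nomad at time t: t steps along the cycle from the root s 0.\<close>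
definition nomad_pos :: "nat \<Rightarrow> (nat \<Rightarrow> nat) \<Rightarrow> nat \<Rightarrow> nat" where
  "nomad_pos m s t = s (t mod m)"

end

theory Submission
  imports Defs
begin

text \<open>
  Put \<open>n = 2m + 1\<close>. It suffices to find a starter: a sequence \<open>s 0, ..., s (2m - 1)\<close>
  of distinct residues mod \<open>n\<close> whose cyclic differences \<open>s (k + 1) - s k\<close> are the
  \<open>2m\<close> nonzero residues, each exactly once. The \<open>n\<close> translates \<open>s + i\<close> are then
  directed \<open>(n - 1)\<close>-cycles, and the arc \<open>(u, v)\<close> lies on exactly one of them: the
  translate that moves the position where the difference \<open>v - u\<close> occurs to \<open>u\<close>.
  The nomad of translate \<open>i\<close> sits at \<open>s t + i\<close>, so two nomads always differ by \<open>i - j\<close>.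

  The starter is antipodal, \<open>s (k + m) = - s k\<close>, with \<open>s k = \<plusminus>(k + 1)\<close> for \<open>k < m\<close>,
  so its entries are \<open>\<plusminus>1, ..., \<plusminus>m\<close>. The signs alternate except for one repetition
  after position \<open>(m - 1) div 2\<close>; this makes the differences \<open>\<plusminus>1\<close>, \<open>\<plusminus>(2k + 3)\<close> and
  \<open>\<plusminus>(m \<plusminus> 1)\<close>, no two of which are equal or opposite mod \<open>n\<close>.
\<close>

definition nomadic_decomposition :: "nat \<Rightarrow> (nat \<Rightarrow> nat \<Rightarrow> nat) \<Rightarrow> bool" where
  "nomadic_decomposition n C \<longleftrightarrow>
     (\<forall>i<n. is_dicycle n (n - 1) (C i)) \<and>
     (\<forall>i<n. \<forall>j<n. i \<noteq> j \<longrightarrow> cycle_arcs (n - 1) (C i) \<inter> cycle_arcs (n - 1) (C j) = {}) \<and>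
     (\<Union>i<n. cycle_arcs (n - 1) (C i)) = Kstar_arcs n \<and>
     (\<forall>i<n. \<forall>j<n. i \<noteq> j \<longrightarrow>
        (\<exists>c :: int. \<not> [c = 0] (mod int n) \<and>
           (\<forall>t. [int (nomad_pos (n - 1) (C i) t) - int (nomad_pos (n - 1) (C j) t) = c] (mod int n)))) \<and>
     (\<forall>i<n. \<forall>j<n. i \<noteq> j \<longrightarrow> (\<forall>t. nomad_pos (n - 1) (C i) t \<noteq> nomad_pos (n - 1) (C j) t))"

definition translate_cycle :: "nat \<Rightarrow> (nat \<Rightarrow> int) \<Rightarrow> nat \<Rightarrow> nat \<Rightarrow> nat" where
  "translate_cycle n s i k = nat ((s k + int i) mod int n)"

definition cyclic_diff :: "nat \<Rightarrow> (nat \<Rightarrow> int) \<Rightarrow> nat \<Rightarrow> int" where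
  "cyclic_diff L s k = s (Suc k mod L) - s k"

lemma translate_cycle_lt:
  assumes "0 < n" shows "translate_cycle n s i k < n"
  using assms unfolding translate_cycle_def by (simp add: nat_less_iff)

lemma translate_cycle_cong:
  assumes "0 < n" shows "[int (translate_cycle n s i k) = s k + int i] (mod int n)"
  using assms unfolding translate_cycle_def by (simp add: cong_def)

lemma translate_cycle_eq_iff:
  assumes "0 < n"
  shows "translate_cycle n s i k = translate_cycle n s j k' \<longleftrightarrow> [s k + int i = s k' + int j] (mod int n)"
  using assms unfolding translate_cycle_def cong_def
  by (metis int_nat_eq mod_int_pos_iff of_nat_0_less_iff)

lemma cong_int_less_imp_eq:
  assumes "i < n" "j < n" "[int i = int j] (mod int n)" shows "i = j"
  using assms cong_int_iff cong_less_modulus_unique_nat by blast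

lemma nonzero_residues_surj:
  fixes f :: "nat \<Rightarrow> int"
  assumes "0 < n"
    and inj: "\<And>k k'. k < n - 1 \<Longrightarrow> k' < n - 1 \<Longrightarrow> [f k = f k'] (mod int n) \<Longrightarrow> k = k'"
    and nz: "\<And>k. k < n - 1 \<Longrightarrow> \<not> [f k = 0] (mod int n)"
    and r: "\<not> [r = 0] (mod int n)"
  obtains k where "k < n - 1" "[f k = r] (mod int n)"
proof -
  let ?g = "\<lambda>k. f k mod int n"
  have residue: "x mod int n \<in> {1..int n - 1}" if "\<not> [x = 0] (mod int n)" for x
  proof -
    have "x mod int n \<noteq> 0"
      using that by (simp add: cong_0_iff dvd_eq_mod_eq_0)
    moreover have "0 \<le> x mod int n" "x mod int n < int n"
      using assms(1) by simp_all
    ultimately show ?thesis by simp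
  qed
  have "inj_on ?g {..<n - 1}"
    using inj by (intro inj_onI) (auto simp: cong_def)
  then have "card (?g ` {..<n - 1}) = card {1..int n - 1}"
    by (simp add: card_image)
  moreover have "?g ` {..<n - 1} \<subseteq> {1..int n - 1}"
    using nz residue by auto
  ultimately have "?g ` {..<n - 1} = {1..int n - 1}"
    by (intro card_subset_eq) auto
  then have "r mod int n \<in> ?g ` {..<n - 1}"
    using residue[OF r] by simp
  then obtain k where "k < n - 1" "f k mod int n = r mod int n"
    by auto
  then show thesis
    using that by (simp add: cong_def)
qed

locale cyclic_starter =
  fixes n :: nat and s :: "nat \<Rightarrow> int"
  assumes three_le_n: "3 \<le> n"
    and starter_inj: "\<lbrakk>k < n - 1; k' < n - 1; [s k = s k'] (mod int n)\<rbrakk> \<Longrightarrow> k = k'"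
    and diff_inj: "\<lbrakk>k < n - 1; k' < n - 1;
      [cyclic_diff (n - 1) s k = cyclic_diff (n - 1) s k'] (mod int n)\<rbrakk> \<Longrightarrow> k = k'"
    and diff_nonzero: "k < n - 1 \<Longrightarrow> \<not> [cyclic_diff (n - 1) s k = 0] (mod int n)"
begin

abbreviation "C \<equiv> translate_cycle n s"

lemma C_lt: "C i k < n"
  using three_le_n by (simp add: translate_cycle_lt)

lemma C_eq_iff: "C i k = C j k' \<longleftrightarrow> [s k + int i = s k' + int j] (mod int n)"
  using three_le_n by (simp add: translate_cycle_eq_iff)

lemma C_diff_cong: "[int (C i k) - int (C j k) = int i - int j] (mod int n)"
proof -
  have "[int (C i k) - int (C j k) = (s k + int i) - (s k + int j)] (mod int n)"
    using three_le_n by (intro cong_diff translate_cycle_cong) auto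
  then show ?thesis by simp
qed

lemma C_next_cong:
  assumes "k < n - 1"
  shows "[int (C i (Suc k mod (n - 1))) = int (C i k) + cyclic_diff (n - 1) s k] (mod int n)"
proof -
  have "[int (C i (Suc k mod (n - 1))) - int (C i k)
      = (s (Suc k mod (n - 1)) + int i) - (s k + int i)] (mod int n)"
    using three_le_n by (intro cong_diff translate_cycle_cong) auto
  then show ?thesis
    by (simp add: cyclic_diff_def cong_iff_dvd_diff algebra_simps)
qed

lemma is_dicycle_C: "is_dicycle n (n - 1) (C i)"
  using three_le_n starter_inj C_lt unfolding is_dicycle_def inj_on_def
  by (auto simp: C_eq_iff cong_add_rcancel)

lemma cycle_arcs_C_disjoint:
  assumes "i < n" "j < n" "i \<noteq> j"
  shows "cycle_arcs (n - 1) (C i) \<inter> cycle_arcs (n - 1) (C j) = {}"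
proof -
  have False if k: "k < n - 1" "k' < n - 1" and tail: "C i k = C j k'"
    and head: "C i (Suc k mod (n - 1)) = C j (Suc k' mod (n - 1))" for k k'
  proof -
    have "[int (C i k) + cyclic_diff (n - 1) s k = int (C j k') + cyclic_diff (n - 1) s k'] (mod int n)"
      using C_next_cong[OF k(1), of i] C_next_cong[OF k(2), of j] head
      by (metis cong_sym cong_trans)
    then have "k = k'"
      using diff_inj[OF k] tail by (simp add: cong_add_lcancel)
    then have "[int i = int j] (mod int n)"
      using tail by (simp add: C_eq_iff cong_add_lcancel)
    then show False
      using cong_int_less_imp_eq assms by blast
  qed
  then show ?thesis
    by (fastforce simp: cycle_arcs_def)
qed

lemma cycle_arcs_C_subset: "cycle_arcs (n - 1) (C i) \<subseteq> Kstar_arcs n"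
proof -
  have "C i (Suc k mod (n - 1)) \<noteq> C i k" if k: "k < n - 1" for k
  proof
    assume "C i (Suc k mod (n - 1)) = C i k"
    then have "[int (C i k) + cyclic_diff (n - 1) s k = int (C i k) + 0] (mod int n)"
      using C_next_cong[OF k, of i] by (simp add: cong_sym)
    then show False
      using diff_nonzero[OF k] by (simp only: cong_add_lcancel)
  qed
  then show ?thesis
    by (fastforce simp: cycle_arcs_def Kstar_arcs_def C_lt)
qed

lemma Kstar_arcs_subset: "Kstar_arcs n \<subseteq> (\<Union>i<n. cycle_arcs (n - 1) (C i))"
proof
  fix a assume "a \<in> Kstar_arcs n"
  then obtain u v where a: "a = (u, v)" and uv: "u < n" "v < n" "u \<noteq> v"
    by (auto simp: Kstar_arcs_def)
  have "\<not> [int v - int u = 0] (mod int n)"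
    using cong_int_less_imp_eq uv by (auto simp: cong_diff_iff_cong_0)
  then obtain k where k: "k < n - 1" "[cyclic_diff (n - 1) s k = int v - int u] (mod int n)"
    using nonzero_residues_surj[of n "cyclic_diff (n - 1) s", OF _ diff_inj diff_nonzero] uv(1) by auto
  define i where "i = nat ((int u - s k) mod int n)"
  have i: "i < n" "[int i = int u - s k] (mod int n)"
    using three_le_n by (auto simp: i_def cong_def nat_less_iff)
  have "[int (C i k) = s k + int i] (mod int n)"
    using three_le_n by (simp add: translate_cycle_cong)
  also have "[s k + int i = int u] (mod int n)"
    using cong_add[OF cong_refl[of "s k"] i(2)] by simp
  finally have tail: "C i k = u"
    using cong_int_less_imp_eq C_lt uv(1) by blast
  have "[int (C i (Suc k mod (n - 1))) = int u + cyclic_diff (n - 1) s k] (mod int n)"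
    using C_next_cong[OF k(1), of i] tail by simp
  also have "[int u + cyclic_diff (n - 1) s k = int v] (mod int n)"
    using cong_add[OF cong_refl[of "int u"] k(2)] by simp
  finally have head: "C i (Suc k mod (n - 1)) = v"
    using cong_int_less_imp_eq C_lt uv(2) by blast
  show "a \<in> (\<Union>i<n. cycle_arcs (n - 1) (C i))"
    using i(1) k(1) tail head unfolding a cycle_arcs_def by auto
qed

theorem nomadic_decomposition_C: "nomadic_decomposition n C"
proof -
  have "\<exists>c. \<not> [c = 0] (mod int n) \<and>
      (\<forall>t. [int (nomad_pos (n - 1) (C i) t) - int (nomad_pos (n - 1) (C j) t) = c] (mod int n))"
    if "i < n" "j < n" "i \<noteq> j" for i j
    using cong_int_less_imp_eq[OF that(1,2)] that(3) C_diff_cong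
    by (intro exI[of _ "int i - int j"]) (auto simp: nomad_pos_def cong_diff_iff_cong_0)
  moreover have "nomad_pos (n - 1) (C i) t \<noteq> nomad_pos (n - 1) (C j) t"
    if "i < n" "j < n" "i \<noteq> j" for i j t
    using cong_int_less_imp_eq that by (auto simp: nomad_pos_def C_eq_iff cong_add_lcancel)
  ultimately show ?thesis
    using is_dicycle_C cycle_arcs_C_disjoint cycle_arcs_C_subset Kstar_arcs_subset
    unfolding nomadic_decomposition_def by blast
qed

end

lemma abs_cong_cases:
  fixes u v :: int
  assumes "[u = v] (mod n)" "0 < \<bar>u\<bar>" "\<bar>u\<bar> < n" "0 < \<bar>v\<bar>" "\<bar>v\<bar> < n"
  shows "\<bar>u\<bar> = \<bar>v\<bar> \<or> \<bar>u\<bar> + \<bar>v\<bar> = n"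
proof -
  obtain q where q: "u - v = n * q"
    using assms(1) by (auto simp: cong_iff_dvd_diff elim: dvdE)
  have "0 < n"
    using assms(2,3) by linarith
  moreover have "n * (- 2) < n * q" "n * q < n * 2"
    using assms(3,5) q unfolding abs_less_iff by linarith+
  ultimately have "- 2 < q" "q < 2"
    by (metis mult_less_cancel_left_pos)+
  then consider "q = 0" | "q = 1" | "q = - 1"
    by linarith
  then show ?thesis
    using q assms(2-5) by cases (auto simp: abs_if)
qed

lemma mod_less_double:
  fixes k m :: nat
  shows "k < 2 * m \<Longrightarrow> k mod m = (if k < m then k else k - m)"
  by (auto simp: le_mod_geq)

lemma antipodal_abs:
  fixes f :: "nat \<Rightarrow> int"
  assumes "\<And>k. k < m \<Longrightarrow> f (k + m) = - f k" "k < 2 * m"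
  shows "\<bar>f k\<bar> = \<bar>f (k mod m)\<bar>"
proof (cases "k < m")
  case False
  then have "k - m < m" "k mod m = k - m"
    using assms(2) mod_less_double by auto
  then show ?thesis
    using assms(1)[of "k - m"] False by simp
qed simp

lemma antipodal_not_cong_0:
  fixes f :: "nat \<Rightarrow> int"
  assumes anti: "\<And>k. k < m \<Longrightarrow> f (k + m) = - f k"
    and bounds: "\<And>k. k < m \<Longrightarrow> 0 < \<bar>f k\<bar> \<and> \<bar>f k\<bar> < int n"
    and "k < 2 * m"
  shows "\<not> [f k = 0] (mod int n)"
proof
  assume "[f k = 0] (mod int n)"
  moreover have "0 < \<bar>f k\<bar>" "\<bar>f k\<bar> < int n"
    using bounds[of "k mod m"] antipodal_abs[of m f, OF anti \<open>k < 2 * m\<close>] \<open>k < 2 * m\<close> by auto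
  ultimately show False
    using dvd_imp_le_int[of "f k" "int n"] by (auto simp: cong_0_iff)
qed

lemma antipodal_cong_inj:
  fixes f :: "nat \<Rightarrow> int"
  assumes "odd n"
    and anti: "\<And>k. k < m \<Longrightarrow> f (k + m) = - f k"
    and bounds: "\<And>k. k < m \<Longrightarrow> 0 < \<bar>f k\<bar> \<and> \<bar>f k\<bar> < int n"
    and separated: "\<And>k k'. \<lbrakk>k < m; k' < m; \<bar>f k\<bar> = \<bar>f k'\<bar> \<or> \<bar>f k\<bar> + \<bar>f k'\<bar> = int n\<rbrakk>
      \<Longrightarrow> k = k'"
    and k: "k < 2 * m" "k' < 2 * m"
    and cong: "[f k = f k'] (mod int n)"
  shows "k = k'"
proof (rule ccontr)
  assume "k \<noteq> k'"
  have abs_k: "\<bar>f k\<bar> = \<bar>f (k mod m)\<bar>" "\<bar>f k'\<bar> = \<bar>f (k' mod m)\<bar>"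
    using antipodal_abs[of m f, OF anti] k by auto
  have "m > 0" using k by simp
  then have "\<bar>f k\<bar> = \<bar>f k'\<bar> \<or> \<bar>f k\<bar> + \<bar>f k'\<bar> = int n"
    using abs_cong_cases[OF cong] bounds[of "k mod m"] bounds[of "k' mod m"] abs_k by simp
  then have "k mod m = k' mod m"
    using separated[of "k mod m" "k' mod m"] abs_k \<open>m > 0\<close> by simp
  with \<open>k \<noteq> k'\<close> k have "k = k' + m \<and> k' < m \<or> k' = k + m \<and> k < m"
    by (simp add: mod_less_double split: if_splits)
  then have "f k' = - f k"
    using anti by auto
  with cong have "int n dvd 2 * f k"
    by (simp add: cong_iff_dvd_diff)
  then have "int n dvd f k"
    using \<open>odd n\<close> by (simp add: coprime_dvd_mult_right_iff)
  then show False
    using antipodal_not_cong_0[of m f n, OF anti bounds k(1)] by (simp add: cong_0_iff)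
qed

definition half_sign :: "nat \<Rightarrow> nat \<Rightarrow> int" where
  "half_sign m k = (if k \<le> (m - 1) div 2 then (-1) ^ k else (-1) ^ Suc k)"

definition starter :: "nat \<Rightarrow> nat \<Rightarrow> int" where
  "starter m k =
    (if k < m then half_sign m k * int (Suc k) else - half_sign m (k - m) * int (Suc (k - m)))"

abbreviation starter_diff :: "nat \<Rightarrow> nat \<Rightarrow> int" where
  "starter_diff m \<equiv> cyclic_diff (2 * m) (starter m)"

lemma abs_half_sign [simp]: "\<bar>half_sign m k\<bar> = 1"
  by (simp add: half_sign_def)

lemma half_sign_Suc:
  "half_sign m (Suc k) = (if k = (m - 1) div 2 then half_sign m k else - half_sign m k)"
  by (simp add: half_sign_def)

lemma starter_antipodal: "k < m \<Longrightarrow> starter m (k + m) = - starter m k"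
  by (simp add: starter_def)

lemma abs_starter: "k < m \<Longrightarrow> \<bar>starter m k\<bar> = int (Suc k)"
  by (simp add: starter_def abs_mult)

lemma starter_diff_antipodal:
  assumes "k < m"
  shows "starter_diff m (k + m) = - starter_diff m k"
proof (cases "Suc k = m")
  case True
  then have "Suc (k + m) mod (2 * m) = 0" "Suc k mod (2 * m) = 0 + m"
    by (metis add_Suc mod_self mult_2, simp)
  then show ?thesis
    using starter_antipodal[of 0 m] starter_antipodal[OF assms] assms
    by (simp add: cyclic_diff_def)
next
  case False
  then have "Suc (k + m) mod (2 * m) = Suc k + m" "Suc k mod (2 * m) = Suc k" "Suc k < m"
    using assms by simp_all
  then show ?thesis
    using starter_antipodal[of "Suc k" m] starter_antipodal[OF assms]
    by (simp add: cyclic_diff_def)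
qed

definition starter_gap :: "nat \<Rightarrow> nat \<Rightarrow> nat" where
  "starter_gap m k = (if k = m - 1 then (if odd m \<and> 1 < m then m - 1 else m + 1)
     else if k = (m - 1) div 2 then 1 else 2 * k + 3)"

lemma abs_starter_diff:
  assumes "k < m"
  shows "\<bar>starter_diff m k\<bar> = int (starter_gap m k)"
proof (cases "Suc k = m")
  case True
  then have "starter_diff m k = - 1 - half_sign m k * int m"
    using starter_antipodal[of 0 m] by (simp add: cyclic_diff_def starter_def half_sign_def)
  moreover have "half_sign m k = (if odd m \<and> 1 < m then - 1 else 1)"
  proof (cases "m = 1")
    case False
    then have "\<not> k \<le> (m - 1) div 2"
      using True by linarith
    then show ?thesis
      using True by (auto simp: half_sign_def)
  qed (use True in \<open>simp add: half_sign_def\<close>)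
  ultimately show ?thesis
    using True by (auto simp: starter_gap_def)
next
  case False
  then have "Suc k < m"
    using assms by simp
  then have diff: "starter_diff m k
      = half_sign m (Suc k) * int (Suc (Suc k)) - half_sign m k * int (Suc k)"
    by (simp add: cyclic_diff_def starter_def)
  have "k \<noteq> m - 1"
    using \<open>Suc k < m\<close> by linarith
  then have starter_gap: "starter_gap m k = (if k = (m - 1) div 2 then 1 else 2 * k + 3)"
    by (simp add: starter_gap_def)
  show ?thesis
  proof (cases "k = (m - 1) div 2")
    case True
    then have "starter_diff m k = half_sign m k"
      unfolding diff half_sign_Suc by (simp add: algebra_simps)
    then show ?thesis
      using True starter_gap by simp
  next
    case not_turn: False
    then have "starter_diff m k = - half_sign m k * (2 * int k + 3)"
      unfolding diff half_sign_Suc by (simp add: algebra_simps)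
    then show ?thesis
      using not_turn starter_gap by (simp add: abs_mult)
  qed
qed

lemma abs_starter_diff_bounds:
  "k < m \<Longrightarrow> 0 < \<bar>starter_diff m k\<bar> \<and> \<bar>starter_diff m k\<bar> < int (2 * m + 1)"
  by (simp add: abs_starter_diff) (auto simp: starter_gap_def)

lemma starter_gap_separated:
  assumes "k < m" "k' < m"
    and sep: "starter_gap m k = starter_gap m k' \<or> starter_gap m k + starter_gap m k' = 2 * m + 1"
  shows "k = k'"
proof -
  define b where "b = (m - 1) div 2"
  have inner: "starter_gap m j = (if j = b then 1 else 2 * j + 3)" "odd (starter_gap m j)"
    if "j < m - 1" for j
    using that by (auto simp: starter_gap_def b_def)
  have inner_vs_last: False
    if j: "j < m - 1"
      and "starter_gap m j = starter_gap m (m - 1) \<or> starter_gap m j + starter_gap m (m - 1) = 2 * m + 1"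
    for j
  proof (cases "odd m")
    case True
    then have "m = 2 * b + 1" "starter_gap m (m - 1) = 2 * b"
      using j by (auto simp: starter_gap_def b_def elim: oddE)
    then show False
      using that inner[OF j] by (auto split: if_splits) presburger
  next
    case False
    then have "m = 2 * b + 2" "starter_gap m (m - 1) = 2 * b + 3"
      using j by (auto simp: starter_gap_def b_def elim: evenE)
    then show False
      using that inner[OF j] by (auto split: if_splits)
  qed
  consider "k < m - 1" "k' < m - 1" | "k = m - 1" "k' = m - 1"
    | "k < m - 1" "k' = m - 1" | "k = m - 1" "k' < m - 1"
    using assms(1,2) by linarith
  then show ?thesis
  proof cases
    case 1
    then have "odd (starter_gap m k)" "odd (starter_gap m k')"
      using inner by auto
    then have "starter_gap m k + starter_gap m k' \<noteq> 2 * m + 1"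
      by presburger
    then have "starter_gap m k = starter_gap m k'"
      using sep by blast
    then show ?thesis
      unfolding inner(1)[OF 1(1)] inner(1)[OF 1(2)] by (auto split: if_splits)
  next
    case 3
    then show ?thesis
      using inner_vs_last sep by blast
  next
    case 4
    then show ?thesis
      using inner_vs_last sep by (metis add.commute)
  qed simp
qed

lemma starter_cong_inj:
  assumes "k < 2 * m" "k' < 2 * m" "[starter m k = starter m k'] (mod int (2 * m + 1))"
  shows "k = k'"
proof (rule antipodal_cong_inj[where f = "starter m"])
  show "\<bar>starter m j\<bar> = \<bar>starter m j'\<bar> \<or> \<bar>starter m j\<bar> + \<bar>starter m j'\<bar> = int (2 * m + 1)
      \<Longrightarrow> j = j'" if "j < m" "j' < m" for j j'
    using that by (simp add: abs_starter)
qed (use assms starter_antipodal abs_starter in auto)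

lemma starter_diff_cong_inj:
  assumes "k < 2 * m" "k' < 2 * m"
    "[starter_diff m k = starter_diff m k'] (mod int (2 * m + 1))"
  shows "k = k'"
proof (rule antipodal_cong_inj[where f = "starter_diff m"])
  show "j = j'" if "j < m" "j' < m" and "\<bar>starter_diff m j\<bar> = \<bar>starter_diff m j'\<bar>
      \<or> \<bar>starter_diff m j\<bar> + \<bar>starter_diff m j'\<bar> = int (2 * m + 1)" for j j'
    using that(3) starter_gap_separated[OF that(1,2)]
    unfolding abs_starter_diff[OF that(1)] abs_starter_diff[OF that(2)] by linarith
qed (use assms starter_diff_antipodal abs_starter_diff_bounds in auto)

lemma starter_diff_not_cong_0:
  assumes "k < 2 * m"
  shows "\<not> [starter_diff m k = 0] (mod int (2 * m + 1))"
  using antipodal_not_cong_0[where f = "starter_diff m"] starter_diff_antipodal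
    abs_starter_diff_bounds assms by blast

lemma starter_is_cyclic_starter:
  assumes "1 \<le> m"
  shows "cyclic_starter (2 * m + 1) (starter m)"
  by unfold_locales (use assms starter_cong_inj starter_diff_cong_inj starter_diff_not_cong_0 in auto)

theorem theorem1:
  fixes n :: nat
  assumes "n \<ge> 3" and "odd n"
  shows "\<exists>C :: nat \<Rightarrow> nat \<Rightarrow> nat.
     (\<forall>i<n. is_dicycle n (n - 1) (C i)) \<and>
     (\<forall>i<n. \<forall>j<n. i \<noteq> j \<longrightarrow> cycle_arcs (n - 1) (C i) \<inter> cycle_arcs (n - 1) (C j) = {}) \<and>
     (\<Union>i<n. cycle_arcs (n - 1) (C i)) = Kstar_arcs n \<and>
     (\<forall>i<n. \<forall>j<n. i \<noteq> j \<longrightarrow>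
        (\<exists>c :: int. \<not> [c = 0] (mod int n) \<and>
           (\<forall>t :: nat. [int (nomad_pos (n - 1) (C i) t) - int (nomad_pos (n - 1) (C j) t) = c] (mod int n)))) \<and>
     (\<forall>i<n. \<forall>j<n. i \<noteq> j \<longrightarrow> (\<forall>t :: nat. nomad_pos (n - 1) (C i) t \<noteq> nomad_pos (n - 1) (C j) t))"
proof -
  define m where "m = n div 2"
  have "n = 2 * m + 1" "1 \<le> m"
    using assms by (simp_all add: m_def)
  then have "nomadic_decomposition n (translate_cycle n (starter m))"
    using cyclic_starter.nomadic_decomposition_C starter_is_cyclic_starter by metis
  then show ?thesis
    unfolding nomadic_decomposition_def by (rule exI[where x = "translate_cycle n (starter m)"])
qed

end
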